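(* Let $(E\to M,\rho,\langle\cdot,\cdot\rangle,[\cdot,\cdot])$ be a Courant algebroid, $\mathcal{G}$ a generalized metric and $\operatorname{div}$ a divergence operator on $E$, and let $D$ be a metric generalized connection with divergence $\operatorname{div}$ and pure-type torsion, with total generalized Ricci curvature $\mathrm{Ric}$. Then $\mathrm{Ric}$ is symmetric if and only if the pair $(\mathcal{G},\operatorname{div})$ is compatible, i.e. \[\operatorname{div}([a_\mp,b_\pm])-\mathcal{L}_{\rho a_\mp}(\operatorname{div}b_\pm)+\mathcal{L}_{\rho b_\pm}(\operatorname{div}a_\mp)=0\quad\text{for all }a_\mp\in\Gamma(V_\mp),\ b_\pm\in\Gamma(V_\pm).\]
   Context: A Courant algebroid $(E\to M,\rho,\langle\cdot,\cdot\rangle,[\cdot,\cdot])$: vector bundle $E$ with nondegenerate symmetric form, anchor $\rho:E\to TM$ and bracket on $\Gamma(E)$ with $[a,[b,c]]=[[a,b],c]+[b,[a,c]]$, $\mathcal{L}_{\rho a}\langle b,c\rangle=\langle[a,b],c\rangle+\langle b,[a,c]\rangle$, $2[a,a]=\rho^*d\langle a,a\rangle$. A generalized connection is a linear $D:\Gamma(E)\to\Gamma(E^*\otimes E)$ with $D(fa)=fDa+\rho^*df\otimes a$ and $\rho^*d\langle a,b\rangle=\langle Da,b\rangle+\langle a,Db\rangle$; $D_ba:=(Da)(b)$, $(Da)^*$ is the adjoint of $b\mapsto D_ba$. Naive curvature $\mathcal{R}_0(a,b)c:=D_aD_bc-D_bD_ac-D_{[a,b]}c$. A generalized metric is a self-adjoint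 $\mathcal{G}\in\operatorname{End}E$ with $\mathcal{G}^2=1$; $V_\pm=\ker(\mathcal{G}\mp1)$, $x_\pm:=\tfrac12(1\pm\mathcal{G})x$. $D$ is metric if it preserves $\Gamma(V_\pm)$. A divergence operator is linear $\operatorname{div}:\Gamma(E)\to C^\infty(M)$ with $\operatorname{div}(fa)=f\operatorname{div}a+\mathcal{L}_{\rho a}f$; $D$ has divergence $\operatorname{div}$ if $\operatorname{div}a=\operatorname{tr}(Da)$. Torsion $T(a,b):=D_ab-D_ba-[a,b]+(Da)^*b\in\Gamma(\wedge^3E^* )$ is of pure type if $T\in\Gamma(\wedge^3V_+\oplus\wedge^3V_-)$. Total curvature $\mathcal{R}(a,b):=\mathcal{R}_0(a_+,b_-)+\mathcal{R}_0(a_-,b_+)$; total generalized Ricci curvature $\mathrm{Ric}(a,b):=\operatorname{tr}(c\mapsto\mathcal{R}(c,a)b)$, a section of $E^*\otimes E^*$. *)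

theory Defs
  imports Complex_Main
begin

text \<open>Algebraic (Serre--Swan) model of a Courant algebroid E over M:
  'f plays the role of the ring of smooth functions C^infinity(M) (a commutative real algebra),
  's the module of smooth sections Gamma(E) (finitely generated projective, expressed through
  a finite dual frame with respect to the nondegenerate pairing), vector fields are derivations
  of 'f.\<close>

record ('f, 's) courant =
  cmul :: "'f \<Rightarrow> 's \<Rightarrow> 's"
  anc  :: "'s \<Rightarrow> 'f \<Rightarrow> 'f"     \<comment> \<open>anc a f = L_{rho a} f\<close>
  ip   :: "'s \<Rightarrow> 's \<Rightarrow> 'f"
  br   :: "'s \<Rightarrow> 's \<Rightarrow> 's"

definition ca_frame :: "('f::comm_ring_1, 's::ab_group_add) courant \<Rightarrow> nat \<Rightarrow> (nat \<Rightarrow> 's) \<Rightarrow> (nat \<Rightarrow> 's) \<Rightarrow> bool" where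
  "ca_frame C n e e' \<longleftrightarrow> (\<forall>x. x = (\<Sum>i<n. cmul C (ip C (e' i) x) (e i)))"

text \<open>rho^* d f: the section c with pairing c x = L_{rho x} f.\<close>
definition ca_dstar :: "('f::comm_ring_1, 's::ab_group_add) courant \<Rightarrow> 'f \<Rightarrow> 's" where
  "ca_dstar C f = (THE c. \<forall>x. ip C c x = anc C x f)"

definition courant_algebroid :: "('f::{comm_ring_1,real_algebra_1}, 's::real_vector) courant \<Rightarrow> bool" where
  "courant_algebroid C \<longleftrightarrow>
    \<comment> \<open>module structure over the function ring\<close>
    (\<forall>f a b. cmul C f (a + b) = cmul C f a + cmul C f b) \<and>
    (\<forall>f g a. cmul C (f + g) a = cmul C f a + cmul C g a) \<and>
    (\<forall>f g a. cmul C (f * g) a = cmul C f (cmul C g a)) \<and>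
    (\<forall>a. cmul C 1 a = a) \<and>
    (\<forall>r a. cmul C (of_real r) a = r *\<^sub>R a) \<and>
    \<comment> \<open>anchor: function-linear map to derivations (vector fields)\<close>
    (\<forall>a b f. anc C (a + b) f = anc C a f + anc C b f) \<and>
    (\<forall>g a f. anc C (cmul C g a) f = g * anc C a f) \<and>
    (\<forall>a f g. anc C a (f + g) = anc C a f + anc C a g) \<and>
    (\<forall>a r f. anc C a (r *\<^sub>R f) = r *\<^sub>R anc C a f) \<and>
    (\<forall>a f g. anc C a (f * g) = f * anc C a g + g * anc C a f) \<and>
    \<comment> \<open>pairing: symmetric, function-bilinear, nondegenerate\<close>
    (\<forall>a b. ip C a b = ip C b a) \<and>
    (\<forall>a b c. ip C (a + b) c = ip C a c + ip C b c) \<and>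
    (\<forall>f a b. ip C (cmul C f a) b = f * ip C a b) \<and>
    (\<forall>a. (\<forall>x. ip C a x = 0) \<longrightarrow> a = 0) \<and>
    \<comment> \<open>Gamma(E) finitely generated projective; pairing induces Gamma(E) = Gamma(E^*)\<close>
    (\<exists>n e e'. ca_frame C n e e') \<and>
    \<comment> \<open>bracket: real bilinear\<close>
    (\<forall>a b c. br C (a + b) c = br C a c + br C b c) \<and>
    (\<forall>a b c. br C a (b + c) = br C a b + br C a c) \<and>
    (\<forall>r a b. br C (r *\<^sub>R a) b = r *\<^sub>R br C a b) \<and>
    (\<forall>r a b. br C a (r *\<^sub>R b) = r *\<^sub>R br C a b) \<and>
    \<comment> \<open>Courant axioms\<close>
    (\<forall>a b c. br C a (br C b c) = br C (br C a b) c + br C b (br C a c)) \<and>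
    (\<forall>a b c. anc C a (ip C b c) = ip C (br C a b) c + ip C b (br C a c)) \<and>
    (\<forall>a. 2 *\<^sub>R br C a a = ca_dstar C (ip C a a))"

definition ca_trace :: "('f::comm_ring_1, 's::ab_group_add) courant \<Rightarrow> ('s \<Rightarrow> 's) \<Rightarrow> 'f" where
  "ca_trace C T = (case (SOME (n, e, e'). ca_frame C n e e') of
      (n, e, e') \<Rightarrow> (\<Sum>i<n. ip C (e' i) (T (e i))))"

text \<open>D b a stands for D_b a.\<close>
definition gen_connection :: "('f::{comm_ring_1,real_algebra_1}, 's::real_vector) courant \<Rightarrow> ('s \<Rightarrow> 's \<Rightarrow> 's) \<Rightarrow> bool" where
  "gen_connection C D \<longleftrightarrow>
    (\<forall>b b' a. D (b + b') a = D b a + D b' a) \<and>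
    (\<forall>f b a. D (cmul C f b) a = cmul C f (D b a)) \<and>
    (\<forall>b a a'. D b (a + a') = D b a + D b a') \<and>
    (\<forall>b f a. D b (cmul C f a) = cmul C f (D b a) + cmul C (anc C b f) a) \<and>
    (\<forall>x a c. anc C x (ip C a c) = ip C (D x a) c + ip C a (D x c))"

definition gen_metric :: "('f::{comm_ring_1,real_algebra_1}, 's::real_vector) courant \<Rightarrow> ('s \<Rightarrow> 's) \<Rightarrow> bool" where
  "gen_metric C G \<longleftrightarrow>
    (\<forall>a b. G (a + b) = G a + G b) \<and>
    (\<forall>f a. G (cmul C f a) = cmul C f (G a)) \<and>
    (\<forall>a b. ip C (G a) b = ip C a (G b)) \<and>
    (\<forall>a. G (G a) = a)"

definition pplus :: "('s::real_vector \<Rightarrow> 's) \<Rightarrow> 's \<Rightarrow> 's" where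
  "pplus G x = (1/2) *\<^sub>R (x + G x)"

definition pminus :: "('s::real_vector \<Rightarrow> 's) \<Rightarrow> 's \<Rightarrow> 's" where
  "pminus G x = (1/2) *\<^sub>R (x - G x)"

definition metric_connection :: "('s::real_vector \<Rightarrow> 's) \<Rightarrow> ('s \<Rightarrow> 's \<Rightarrow> 's) \<Rightarrow> bool" where
  "metric_connection G D \<longleftrightarrow>
    (\<forall>b a. G a = a \<longrightarrow> G (D b a) = D b a) \<and>
    (\<forall>b a. G a = - a \<longrightarrow> G (D b a) = - D b a)"

definition divergence_op :: "('f::{comm_ring_1,real_algebra_1}, 's::real_vector) courant \<Rightarrow> ('s \<Rightarrow> 'f) \<Rightarrow> bool" where
  "divergence_op C dv \<longleftrightarrow>
    (\<forall>a b. dv (a + b) = dv a + dv b) \<and>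
    (\<forall>r a. dv (r *\<^sub>R a) = r *\<^sub>R dv a) \<and>
    (\<forall>f a. dv (cmul C f a) = f * dv a + anc C a f)"

definition has_divergence :: "('f::comm_ring_1, 's::ab_group_add) courant \<Rightarrow> ('s \<Rightarrow> 's \<Rightarrow> 's) \<Rightarrow> ('s \<Rightarrow> 'f) \<Rightarrow> bool" where
  "has_divergence C D dv \<longleftrightarrow> (\<forall>a. dv a = ca_trace C (\<lambda>b. D b a))"

text \<open>(Da)^* b : the section c with pairing c x = pairing (D_x a) b.\<close>
definition conn_adj :: "('f::comm_ring_1, 's::ab_group_add) courant \<Rightarrow> ('s \<Rightarrow> 's \<Rightarrow> 's) \<Rightarrow> 's \<Rightarrow> 's \<Rightarrow> 's" where
  "conn_adj C D a b = (THE c. \<forall>x. ip C c x = ip C (D x a) b)"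

definition torsion :: "('f::comm_ring_1, 's::ab_group_add) courant \<Rightarrow> ('s \<Rightarrow> 's \<Rightarrow> 's) \<Rightarrow> 's \<Rightarrow> 's \<Rightarrow> 's" where
  "torsion C D a b = D a b - D b a - br C a b + conn_adj C D a b"

text \<open>T in Gamma(wedge^3 V+ + wedge^3 V-): the trilinear form only has pure-type components.\<close>
definition pure_type_torsion :: "('f::{comm_ring_1,real_algebra_1}, 's::real_vector) courant \<Rightarrow> ('s \<Rightarrow> 's) \<Rightarrow> ('s \<Rightarrow> 's \<Rightarrow> 's) \<Rightarrow> bool" where
  "pure_type_torsion C G D \<longleftrightarrow>
    (\<forall>a b c. ip C (torsion C D a b) c =
       ip C (torsion C D (pplus G a) (pplus G b)) (pplus G c)
     + ip C (torsion C D (pminus G a) (pminus G b)) (pminus G c))"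

definition naive_curv :: "('f, 's::ab_group_add) courant \<Rightarrow> ('s \<Rightarrow> 's \<Rightarrow> 's) \<Rightarrow> 's \<Rightarrow> 's \<Rightarrow> 's \<Rightarrow> 's" where
  "naive_curv C D a b c = D a (D b c) - D b (D a c) - D (br C a b) c"

definition total_curv :: "('f, 's::real_vector) courant \<Rightarrow> ('s \<Rightarrow> 's) \<Rightarrow> ('s \<Rightarrow> 's \<Rightarrow> 's) \<Rightarrow> 's \<Rightarrow> 's \<Rightarrow> 's \<Rightarrow> 's" where
  "total_curv C G D a b c = naive_curv C D (pplus G a) (pminus G b) c
                          + naive_curv C D (pminus G a) (pplus G b) c"

definition total_ricci :: "('f::comm_ring_1, 's::real_vector) courant \<Rightarrow> ('s \<Rightarrow> 's) \<Rightarrow> ('s \<Rightarrow> 's \<Rightarrow> 's) \<Rightarrow> 's \<Rightarrow> 's \<Rightarrow> 'f" where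
  "total_ricci C G D a b = ca_trace C (\<lambda>c. total_curv C G D c a b)"

definition compatible_pair :: "('f::comm_ring_1, 's::real_vector) courant \<Rightarrow> ('s \<Rightarrow> 's) \<Rightarrow> ('s \<Rightarrow> 'f) \<Rightarrow> bool" where
  "compatible_pair C G dv \<longleftrightarrow>
    (\<forall>a b. ((G a = - a \<and> G b = b) \<or> (G a = a \<and> G b = - b)) \<longrightarrow>
       dv (br C a b) - anc C a (dv b) + anc C b (dv a) = 0)"

end

theory Submission
  imports Defs
begin

text \<open>Pure-type torsion and metricity of D make the bracket of sections of opposite type
  torsion-free: [a, b] = D_a b - D_b a for a in V+ and b in V-. Feeding this into the naive
  curvature and using tr [D_a, S] = a(tr S) for tensorial S gives, for such a and b,
  Ric(a, b) = div (D_a b) - a(div b) - tr (c \<mapsto> D_{D_{c-} a} b), and cyclicity of the trace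
  identifies the last term with its counterpart in Ric(b, a). Hence Ric(a, b) - Ric(b, a) is
  exactly the compatibility expression. On V+ \<times> V+ the map c \<mapsto> R(c, u) v takes values in
  V+ and vanishes on V+, so its trace, i.e. Ric(u, v), is zero; thus symmetry of Ric reduces to
  the mixed case. Replacing G by -G swaps V+ and V- and leaves every hypothesis and Ric unchanged,
  so each mixed-type statement needs to be proved in one orientation only.\<close>

lemma pplus_neg [simp]: "pplus (\<lambda>x. - G x) = pminus G"
  by (simp add: fun_eq_iff pplus_def pminus_def)

lemma pminus_neg [simp]: "pminus (\<lambda>x. - G x) = pplus G"
  by (simp add: fun_eq_iff pplus_def pminus_def)

lemma total_ricci_neg [simp]: "total_ricci C (\<lambda>x. - G x) D = total_ricci C G D"
  by (simp add: fun_eq_iff total_ricci_def total_curv_def add.commute)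

lemma metric_connection_neg: "metric_connection (\<lambda>x. - G x) D \<longleftrightarrow> metric_connection G D"
  unfolding metric_connection_def by (auto simp: minus_equation_iff)

lemma pure_type_torsion_neg: "pure_type_torsion C (\<lambda>x. - G x) D \<longleftrightarrow> pure_type_torsion C G D"
  unfolding pure_type_torsion_def by (simp add: add.commute)

locale courant_alg =
  fixes C :: "('f::{comm_ring_1,real_algebra_1}, 's::real_vector) courant"
  assumes courant: "courant_algebroid C"
begin

lemma
  shows cmul_add_right: "cmul C f (a + b) = cmul C f a + cmul C f b"
    and cmul_add_left: "cmul C (f + g) a = cmul C f a + cmul C g a"
    and cmul_mult: "cmul C (f * g) a = cmul C f (cmul C g a)"
    and cmul_one: "cmul C 1 a = a"
    and cmul_of_real: "cmul C (of_real r) a = r *\<^sub>R a"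
    and anc_add: "anc C a (f + g) = anc C a f + anc C a g"
    and ip_commute: "ip C a b = ip C b a"
    and ip_add_left: "ip C (a + b) c = ip C a c + ip C b c"
    and ip_cmul_left: "ip C (cmul C f a) b = f * ip C a b"
    and ip_nondegenerate: "(\<And>x. ip C a x = 0) \<Longrightarrow> a = 0"
    and frame_exists: "\<exists>n e e'. ca_frame C n e e'"
    and br_add_left: "br C (a + b) c = br C a c + br C b c"
    and br_add_right: "br C a (b + c) = br C a b + br C a c"
  using courant unfolding courant_algebroid_def by auto

sublocale sections: module "cmul C"
  by standard (simp_all add: cmul_add_right cmul_add_left cmul_mult cmul_one)

sublocale ip_left: additive "\<lambda>a. ip C a b" for b
  by standard (rule ip_add_left)

sublocale ip_right: additive "ip C a" for a
  by standard (simp add: ip_commute[of a] ip_add_left)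

sublocale anc: additive "anc C a" for a
  by standard (rule anc_add)

sublocale br_left: additive "\<lambda>a. br C a b" for b
  by standard (rule br_add_left)

sublocale br_right: additive "br C a" for a
  by standard (rule br_add_right)

lemma ip_cmul_right: "ip C a (cmul C f b) = f * ip C a b"
  by (simp add: ip_commute[of a] ip_cmul_left)

lemma cmul_scaleR: "cmul C f (r *\<^sub>R a) = r *\<^sub>R cmul C f a"
  by (metis cmul_mult cmul_of_real mult.commute)

abbreviation tensorial :: "('s \<Rightarrow> 's) \<Rightarrow> bool" where
  "tensorial \<equiv> module_hom (cmul C) (cmul C)"

lemma tensorialI:
  assumes "\<And>x y. T (x + y) = T x + T y" and "\<And>f x. T (cmul C f x) = cmul C f (T x)"
  shows "tensorial T"
  using assms by unfold_locales

lemma trace_frame: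
  obtains n e e' where "ca_frame C n e e'"
    and "\<And>T. ca_trace C T = (\<Sum>i<n. ip C (e' i) (T (e i)))"
proof -
  from frame_exists have "\<exists>p. case p of (n, e, e') \<Rightarrow> ca_frame C n e e'" by auto
  then have "case SOME p. (case p of (n, e, e') \<Rightarrow> ca_frame C n e e') of
      (n, e, e') \<Rightarrow> ca_frame C n e e'"
    by (rule someI_ex)
  then show thesis
    using that unfolding ca_trace_def by (auto split: prod.splits)
qed

lemma frame_expansion: "ca_frame C n e e' \<Longrightarrow> x = (\<Sum>i<n. cmul C (ip C (e' i) x) (e i))"
  unfolding ca_frame_def by blast

lemma frame_ip_expansion:
  assumes "ca_frame C n e e'"
  shows "ip C u x = (\<Sum>i<n. ip C (e' i) x * ip C u (e i))"
  by (subst frame_expansion[OF assms, of x]) (simp add: ip_right.sum ip_cmul_right)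

lemma frame_tensorial_expansion:
  assumes "ca_frame C n e e'" and "tensorial A"
  shows "A x = (\<Sum>i<n. cmul C (ip C (e' i) x) (A (e i)))"
proof -
  interpret A: module_hom "cmul C" "cmul C" A by (fact assms(2))
  show ?thesis by (subst frame_expansion[OF assms(1), of x]) (simp add: A.sum A.scale)
qed

lemma trace_add: "ca_trace C (\<lambda>c. F c + H c) = ca_trace C F + ca_trace C H"
  by (rule trace_frame) (simp add: ip_right.add sum.distrib)

lemma trace_diff: "ca_trace C (\<lambda>c. F c - H c) = ca_trace C F - ca_trace C H"
  by (rule trace_frame) (simp add: ip_right.diff sum_subtractf)

lemma trace_zero: "ca_trace C (\<lambda>c. 0) = 0"
  by (rule trace_frame) (simp add: ip_right.zero)

lemma trace_comp_commute:
  assumes "tensorial A" and "tensorial B"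
  shows "ca_trace C (\<lambda>c. A (B c)) = ca_trace C (\<lambda>c. B (A c))"
proof (rule trace_frame)
  fix n e e'
  assume frame: "ca_frame C n e e'" and trace: "\<And>T. ca_trace C T = (\<Sum>i<n. ip C (e' i) (T (e i)))"
  have double_sum: "ca_trace C (\<lambda>c. P (Q c))
      = (\<Sum>i<n. \<Sum>j<n. ip C (e' j) (Q (e i)) * ip C (e' i) (P (e j)))"
    if "tensorial P" for P Q
    unfolding trace frame_tensorial_expansion[OF frame that, of "Q _"]
    by (simp add: ip_right.sum ip_cmul_right)
  show ?thesis
    unfolding double_sum[OF assms(1)] double_sum[OF assms(2)]
    by (subst sum.swap) (simp add: mult.commute)
qed

lemma trace_comp_finite_rank:
  assumes "tensorial S"
  shows "ca_trace C (\<lambda>c. S (\<Sum>j<m. cmul C (ip C (u j) c) (w j))) = (\<Sum>j<m. ip C (u j) (S (w j)))"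
proof (rule trace_frame)
  fix n e e'
  assume frame: "ca_frame C n e e'" and trace: "\<And>T. ca_trace C T = (\<Sum>i<n. ip C (e' i) (T (e i)))"
  interpret S: module_hom "cmul C" "cmul C" S by (fact assms)
  have "ca_trace C (\<lambda>c. S (\<Sum>j<m. cmul C (ip C (u j) c) (w j)))
      = (\<Sum>i<n. \<Sum>j<m. ip C (u j) (e i) * ip C (e' i) (S (w j)))"
    unfolding trace by (simp add: S.sum S.scale ip_right.sum ip_cmul_right)
  also have "\<dots> = (\<Sum>j<m. \<Sum>i<n. ip C (e' i) (S (w j)) * ip C (u j) (e i))"
    by (subst sum.swap) (simp add: mult.commute)
  also have "\<dots> = (\<Sum>j<m. ip C (u j) (S (w j)))"
    by (simp only: frame_ip_expansion[OF frame, symmetric])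
  finally show ?thesis .
qed

end

locale courant_connection = courant_alg +
  fixes D
  assumes connection: "gen_connection C D"
begin

lemma
  shows D_add_left: "D (b + b') a = D b a + D b' a"
    and D_cmul_left: "D (cmul C f b) a = cmul C f (D b a)"
    and D_add_right: "D b (a + a') = D b a + D b a'"
    and D_Leibniz: "D b (cmul C f a) = cmul C f (D b a) + cmul C (anc C b f) a"
    and anc_ip_D: "anc C x (ip C a c) = ip C (D x a) c + ip C a (D x c)"
  using connection unfolding gen_connection_def by auto

sublocale D_left: module_hom "cmul C" "cmul C" "\<lambda>b. D b a" for a
  by unfold_locales (simp_all add: D_add_left D_cmul_left)

sublocale D_right: additive "D b" for b
  by standard (rule D_add_right)

lemma tensorial_comp_D_left: "tensorial P \<Longrightarrow> tensorial (\<lambda>c. D (P c) a)"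
  by (rule tensorialI) (simp_all add: module_hom.add module_hom.scale D_add_left D_cmul_left)

lemma frame_derivative:
  assumes frame: "ca_frame C n e e'"
  shows "(\<Sum>j<n. cmul C (ip C (e' j) y) (D x (e j))) + (\<Sum>j<n. cmul C (ip C (D x (e' j)) y) (e j)) = 0"
proof -
  have "D x y = D x (\<Sum>j<n. cmul C (ip C (e' j) y) (e j))"
    by (subst frame_expansion[OF frame, of y]) (rule refl)
  also have "\<dots> = (\<Sum>j<n. cmul C (ip C (e' j) y) (D x (e j)))
      + (\<Sum>j<n. cmul C (ip C (D x (e' j)) y) (e j)) + (\<Sum>j<n. cmul C (ip C (e' j) (D x y)) (e j))"
    by (simp add: D_right.sum D_Leibniz anc_ip_D sections.scale_left_distrib sum.distrib add.assoc)
  also have "(\<Sum>j<n. cmul C (ip C (e' j) (D x y)) (e j)) = D x y"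
    by (rule frame_expansion[OF frame, symmetric])
  finally show ?thesis by simp
qed

lemma trace_commutator_D:
  assumes S: "tensorial S"
  shows "ca_trace C (\<lambda>c. D x (S c)) - ca_trace C (\<lambda>c. S (D x c)) = anc C x (ca_trace C S)"
proof (rule trace_frame)
  fix n e e'
  assume frame: "ca_frame C n e e'" and trace: "\<And>T. ca_trace C T = (\<Sum>i<n. ip C (e' i) (T (e i)))"
  interpret S: module_hom "cmul C" "cmul C" S by (fact S)
  let ?dual_term = "\<Sum>j<n. ip C (D x (e' j)) (S (e j))"
  have "ca_trace C (\<lambda>c. S (D x c)) + ?dual_term
      = ca_trace C (\<lambda>c. S (\<Sum>j<n. cmul C (ip C (e' j) c) (D x (e j)))
                       + S (\<Sum>j<n. cmul C (ip C (D x (e' j)) c) (e j)))"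
    by (simp add: trace_add trace_comp_finite_rank[OF S] trace)
  also have "\<dots> = 0"
    by (simp add: S.add[symmetric] frame_derivative[OF frame] trace_zero)
  finally have "ca_trace C (\<lambda>c. S (D x c)) = - ?dual_term"
    by (simp add: add_eq_0_iff)
  moreover have "anc C x (ca_trace C S) = ?dual_term + ca_trace C (\<lambda>c. D x (S c))"
    by (simp add: trace anc.sum anc_ip_D sum.distrib)
  ultimately show ?thesis by simp
qed

lemma conn_adj_eq_zero:
  assumes "\<And>z. ip C (D z x) y = 0"
  shows "conn_adj C D x y = 0"
  unfolding conn_adj_def
proof (rule the_equality)
  show "\<forall>z. ip C 0 z = ip C (D z x) y"
    by (simp add: assms ip_left.zero)
  show "c = 0" if "\<forall>z. ip C c z = ip C (D z x) y" for c
    using that assms by (simp add: ip_nondegenerate)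
qed

lemma torsion_zero_left: "torsion C D 0 b = 0"
  and torsion_zero_right: "torsion C D a 0 = 0"
  unfolding torsion_def
  by (simp_all add: conn_adj_eq_zero D_left.zero D_right.zero ip_left.zero ip_right.zero
      br_left.zero br_right.zero)

lemma naive_curv_add_left: "naive_curv C D (x + y) u v = naive_curv C D x u v + naive_curv C D y u v"
  and naive_curv_add_mid: "naive_curv C D x (u + u') v = naive_curv C D x u v + naive_curv C D x u' v"
  and naive_curv_add_right: "naive_curv C D x u (v + v') = naive_curv C D x u v + naive_curv C D x u v'"
  unfolding naive_curv_def
  by (simp_all add: D_add_left D_add_right br_add_left br_add_right algebra_simps)

lemma naive_curv_zero_left: "naive_curv C D 0 u v = 0"
  and naive_curv_zero_mid: "naive_curv C D x 0 v = 0"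
  unfolding naive_curv_def
  by (simp_all add: D_left.zero D_right.zero br_left.zero br_right.zero)

end

locale courant_metric = courant_alg +
  fixes G
  assumes metric: "gen_metric C G"
begin

lemma
  shows G_add: "G (a + b) = G a + G b"
    and G_cmul: "G (cmul C f a) = cmul C f (G a)"
    and G_self_adjoint: "ip C (G a) b = ip C a (G b)"
    and G_involutive: "G (G a) = a"
  using metric unfolding gen_metric_def by auto

sublocale G: module_hom "cmul C" "cmul C" G
  by unfold_locales (simp_all add: G_add G_cmul)

lemma G_scaleR: "G (r *\<^sub>R a) = r *\<^sub>R G a"
  by (metis G_cmul cmul_of_real)

lemma gen_metric_neg: "gen_metric C (\<lambda>x. - G x)"
  unfolding gen_metric_def
  by (simp add: G.neg G_add G_cmul G_involutive G_self_adjoint ip_left.minus ip_right.minus)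

lemma pplus_add_pminus: "pplus G x + pminus G x = x"
  unfolding pplus_def pminus_def by (simp add: scaleR_add_right[symmetric])

lemma G_pplus: "G (pplus G x) = pplus G x"
  unfolding pplus_def by (simp add: G_scaleR G_add G_involutive add.commute)

lemma G_pminus: "G (pminus G x) = - pminus G x"
  unfolding pminus_def by (simp add: G_scaleR G.diff G_involutive scaleR_diff_right)

lemma
  assumes "G y = y"
  shows pplus_eq_self: "pplus G y = y" and pminus_eq_zero: "pminus G y = 0"
  using assms unfolding pplus_def pminus_def by (simp_all add: scaleR_add_right[symmetric])

lemma
  assumes "G y = - y"
  shows pplus_eq_zero: "pplus G y = 0" and pminus_eq_self: "pminus G y = y"
  using assms unfolding pplus_def pminus_def by (simp_all add: scaleR_add_right[symmetric])

lemma tensorial_pplus: "tensorial (pplus G)"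
  by (rule tensorialI) (simp_all add: pplus_def G_add G_cmul cmul_scaleR algebra_simps)

lemma tensorial_pminus: "tensorial (pminus G)"
  by (rule tensorialI) (simp_all add: pminus_def G_add G_cmul cmul_scaleR algebra_simps)

lemma ip_eigenspaces_orthogonal:
  assumes "G u = u" and "G v = - v"
  shows "ip C u v = 0"
proof -
  have "ip C u v = - ip C u v"
    by (metis assms G_self_adjoint ip_right.minus)
  then have "(2::real) *\<^sub>R ip C u v = 0"
    by (simp add: scaleR_2 add_eq_0_iff)
  then show ?thesis by simp
qed

end

locale pure_metric_connection = courant_connection + courant_metric +
  fixes dv
  assumes metric_conn: "metric_connection G D"
    and divergence: "has_divergence C D dv"
    and pure_torsion: "pure_type_torsion C G D"
begin

lemma pure_metric_connection_neg: "pure_metric_connection C D (\<lambda>x. - G x) dv"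
  by unfold_locales
    (simp_all add: gen_metric_neg metric_connection_neg pure_type_torsion_neg
      metric_conn divergence pure_torsion)

lemma D_preserves_plus: "G a = a \<Longrightarrow> G (D b a) = D b a"
  and D_preserves_minus: "G a = - a \<Longrightarrow> G (D b a) = - D b a"
  using metric_conn unfolding metric_connection_def by auto

lemma D_pminus: "D b (pminus G x) = pminus G (D b x)"
proof -
  have "pminus G (D b x) = pminus G (D b (pplus G x)) + pminus G (D b (pminus G x))"
    by (metis pplus_add_pminus D_add_right module_hom.add tensorial_pminus)
  then show ?thesis
    by (simp add: pminus_eq_self pminus_eq_zero D_preserves_plus D_preserves_minus G_pplus G_pminus)
qed

lemma torsion_mixed_type:
  assumes "pplus G x = 0 \<or> pplus G y = 0" and "pminus G x = 0 \<or> pminus G y = 0"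
  shows "torsion C D x y = 0"
proof (rule ip_nondegenerate)
  fix z
  have "ip C (torsion C D x y) z = ip C (torsion C D (pplus G x) (pplus G y)) (pplus G z)
      + ip C (torsion C D (pminus G x) (pminus G y)) (pminus G z)"
    using pure_torsion unfolding pure_type_torsion_def by blast
  then show "ip C (torsion C D x y) z = 0"
    using assms by (auto simp: torsion_zero_left torsion_zero_right ip_left.zero)
qed

lemma bracket_opposite_types:
  assumes a: "G a = a" and b: "G b = - b"
  shows "br C a b = D a b - D b a" and "br C b a = D b a - D a b"
proof -
  have "pplus G b = 0" "pminus G a = 0"
    using a b by (simp_all add: pplus_eq_zero pminus_eq_zero)
  then have "torsion C D a b = 0" "torsion C D b a = 0"
    by (simp_all add: torsion_mixed_type)
  moreover have "conn_adj C D a b = 0" "conn_adj C D b a = 0"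
    using a b D_preserves_plus D_preserves_minus ip_eigenspaces_orthogonal ip_commute
    by (metis conn_adj_eq_zero)+
  ultimately show "br C a b = D a b - D b a" and "br C b a = D b a - D a b"
    unfolding torsion_def by (simp_all add: algebra_simps)
qed

lemma div_eq_trace: "dv w = ca_trace C (\<lambda>c. D c w)"
  using divergence unfolding has_divergence_def by blast

lemma div_diff: "dv (x - y) = dv x - dv y"
  by (simp add: div_eq_trace D_right.diff trace_diff)

lemma div_eq_trace_pminus:
  assumes w: "G w = - w"
  shows "ca_trace C (\<lambda>c. D (pminus G c) w) = dv w"
proof -
  have "ca_trace C (\<lambda>c. D (pplus G c) w) = ca_trace C (\<lambda>c. pminus G (D (pplus G c) w))"
    by (simp add: pminus_eq_self D_preserves_minus w)
  also have "\<dots> = ca_trace C (\<lambda>c. D (pplus G (pminus G c)) w)"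
    by (rule trace_comp_commute[OF tensorial_pminus tensorial_comp_D_left[OF tensorial_pplus]])
  also have "\<dots> = 0"
    by (simp add: pplus_eq_zero G_pminus D_left.zero trace_zero)
  finally have "ca_trace C (\<lambda>c. D (pplus G c) w) = 0" .
  moreover have "dv w = ca_trace C (\<lambda>c. D (pplus G c) w) + ca_trace C (\<lambda>c. D (pminus G c) w)"
    by (simp add: div_eq_trace trace_add[symmetric] D_add_left[symmetric] pplus_add_pminus)
  ultimately show ?thesis by simp
qed

lemma total_curv_plus:
  assumes "G a = a"
  shows "total_curv C G D c a b = naive_curv C D (pminus G c) a b"
  using assms unfolding total_curv_def
  by (simp add: pplus_eq_self pminus_eq_zero naive_curv_zero_mid)

lemma total_ricci_plus_minus:
  assumes a: "G a = a" and b: "G b = - b"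
  shows "total_ricci C G D a b
    = dv (D a b) - anc C a (dv b) - ca_trace C (\<lambda>c. D (D (pminus G c) a) b)"
proof -
  let ?S = "\<lambda>c. D (pminus G c) b"
  have S: "tensorial ?S"
    by (rule tensorial_comp_D_left[OF tensorial_pminus])
  have bracket: "br C (pminus G c) a = D (pminus G c) a - pminus G (D a c)" for c
    using bracket_opposite_types(2)[OF a G_pminus] by (simp add: D_pminus)
  have curv: "naive_curv C D (pminus G c) a b
      = D (pminus G c) (D a b) - (D a (?S c) - ?S (D a c)) - D (D (pminus G c) a) b" for c
    unfolding naive_curv_def bracket D_left.diff by (simp add: D_pminus algebra_simps)
  have "total_ricci C G D a b = ca_trace C (\<lambda>c. D (pminus G c) (D a b))
      - (ca_trace C (\<lambda>c. D a (?S c)) - ca_trace C (\<lambda>c. ?S (D a c)))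
      - ca_trace C (\<lambda>c. D (D (pminus G c) a) b)"
    unfolding total_ricci_def total_curv_plus[OF a] curv by (simp only: trace_diff)
  also have "ca_trace C (\<lambda>c. D (pminus G c) (D a b)) = dv (D a b)"
    by (rule div_eq_trace_pminus) (rule D_preserves_minus[OF b])
  also have "ca_trace C (\<lambda>c. D a (?S c)) - ca_trace C (\<lambda>c. ?S (D a c)) = anc C a (dv b)"
    by (simp only: trace_commutator_D[OF S] div_eq_trace_pminus[OF b])
  finally show ?thesis .
qed

lemma trace_D_D_swap:
  assumes a: "G a = a" and b: "G b = - b"
  shows "ca_trace C (\<lambda>c. D (D (pminus G c) a) b) = ca_trace C (\<lambda>c. D (D (pplus G c) b) a)"
proof -
  have "ca_trace C (\<lambda>c. D (D (pminus G c) a) b) = ca_trace C (\<lambda>c. D (pplus G (D (pminus G c) a)) b)"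
    by (simp add: pplus_eq_self D_preserves_plus a)
  also have "\<dots> = ca_trace C (\<lambda>c. D (pminus G (D (pplus G c) b)) a)"
    by (rule trace_comp_commute[OF tensorial_comp_D_left tensorial_comp_D_left])
      (simp_all add: tensorial_pplus tensorial_pminus)
  also have "\<dots> = ca_trace C (\<lambda>c. D (D (pplus G c) b) a)"
    by (simp add: pminus_eq_self D_preserves_minus b)
  finally show ?thesis .
qed

lemma total_ricci_antisym_plus_minus:
  assumes a: "G a = a" and b: "G b = - b"
  shows "total_ricci C G D a b - total_ricci C G D b a
    = dv (br C a b) - anc C a (dv b) + anc C b (dv a)"
proof -
  interpret neg: pure_metric_connection C D "\<lambda>x. - G x" dv
    by (fact pure_metric_connection_neg)
  have "total_ricci C G D b a
      = dv (D b a) - anc C b (dv a) - ca_trace C (\<lambda>c. D (D (pplus G c) b) a)"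
    using neg.total_ricci_plus_minus[of b a] a b by simp
  then show ?thesis
    by (simp add: total_ricci_plus_minus[OF a b] trace_D_D_swap[OF a b]
        bracket_opposite_types(1)[OF a b] div_diff)
qed

lemma total_ricci_antisym:
  assumes "(G a = - a \<and> G b = b) \<or> (G a = a \<and> G b = - b)"
  shows "total_ricci C G D a b - total_ricci C G D b a
    = dv (br C a b) - anc C a (dv b) + anc C b (dv a)"
proof -
  interpret neg: pure_metric_connection C D "\<lambda>x. - G x" dv
    by (fact pure_metric_connection_neg)
  show ?thesis
    using assms total_ricci_antisym_plus_minus neg.total_ricci_antisym_plus_minus[of a b] by auto
qed

lemma naive_curv_cmul_left:
  assumes x: "G x = - x" and u: "G u = u"
  shows "naive_curv C D (cmul C f x) u v = cmul C f (naive_curv C D x u v)"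
proof -
  have "G (cmul C f x) = - cmul C f x"
    by (simp add: G_cmul x)
  then have "br C (cmul C f x) u = D (cmul C f x) u - D u (cmul C f x)"
    by (rule bracket_opposite_types(2)[OF u])
  moreover have "br C x u = D x u - D u x"
    by (rule bracket_opposite_types(2)[OF u x])
  ultimately show ?thesis
    unfolding naive_curv_def
    by (simp add: D_cmul_left D_add_left D_Leibniz D_left.diff D_right.diff sections.scale_right_diff_distrib)
qed

lemma total_ricci_plus_plus:
  assumes u: "G u = u" and v: "G v = v"
  shows "total_ricci C G D u v = 0"
proof -
  let ?S = "\<lambda>c. naive_curv C D (pminus G c) u v"
  have S: "tensorial ?S"
  proof (rule tensorialI)
    show "?S (x + y) = ?S x + ?S y" for x y
      by (simp add: module_hom.add[OF tensorial_pminus] naive_curv_add_left)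
    show "?S (cmul C f x) = cmul C f (?S x)" for f x
      by (simp add: module_hom.scale[OF tensorial_pminus] naive_curv_cmul_left G_pminus u)
  qed
  have "pplus G (?S c) = ?S c" for c
    by (rule pplus_eq_self) (simp add: naive_curv_def G.diff D_preserves_plus v)
  then have "total_ricci C G D u v = ca_trace C (\<lambda>c. pplus G (?S c))"
    unfolding total_ricci_def total_curv_plus[OF u] by simp
  also have "\<dots> = ca_trace C (\<lambda>c. ?S (pplus G c))"
    by (rule trace_comp_commute[OF tensorial_pplus S])
  also have "\<dots> = 0"
    by (simp add: pminus_eq_zero G_pplus naive_curv_zero_left trace_zero)
  finally show ?thesis .
qed

lemma total_ricci_add_left:
  "total_ricci C G D (a + a') b = total_ricci C G D a b + total_ricci C G D a' b"
  unfolding total_ricci_def total_curv_def trace_add[symmetric]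
  by (simp add: module_hom.add[OF tensorial_pplus] module_hom.add[OF tensorial_pminus]
      naive_curv_add_mid algebra_simps)

lemma total_ricci_add_right:
  "total_ricci C G D a (b + b') = total_ricci C G D a b + total_ricci C G D a b'"
  unfolding total_ricci_def total_curv_def trace_add[symmetric]
  by (simp add: naive_curv_add_right algebra_simps)

lemma total_ricci_decompose:
  "total_ricci C G D x y
    = total_ricci C G D (pplus G x) (pminus G y) + total_ricci C G D (pminus G x) (pplus G y)"
proof -
  interpret neg: pure_metric_connection C D "\<lambda>x. - G x" dv
    by (fact pure_metric_connection_neg)
  have "total_ricci C G D x y = total_ricci C G D (pplus G x + pminus G x) (pplus G y + pminus G y)"
    by (simp only: pplus_add_pminus)
  also have "\<dots> = total_ricci C G D (pplus G x) (pminus G y) + total_ricci C G D (pminus G x) (pplus G y)"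
    using total_ricci_plus_plus[OF G_pplus G_pplus] neg.total_ricci_plus_plus[of "pminus G x" "pminus G y"]
    by (simp add: total_ricci_add_left total_ricci_add_right G_pminus)
  finally show ?thesis .
qed

lemma total_ricci_symmetric_iff_compatible:
  "(\<forall>a b. total_ricci C G D a b = total_ricci C G D b a) \<longleftrightarrow> compatible_pair C G dv"
proof -
  have "compatible_pair C G dv \<longleftrightarrow> (\<forall>a b. (G a = - a \<and> G b = b) \<or> (G a = a \<and> G b = - b)
      \<longrightarrow> total_ricci C G D a b = total_ricci C G D b a)"
    unfolding compatible_pair_def by (simp add: total_ricci_antisym[symmetric])
  moreover have "total_ricci C G D x y = total_ricci C G D y x"
    if "\<forall>a b. (G a = - a \<and> G b = b) \<or> (G a = a \<and> G b = - b)
      \<longrightarrow> total_ricci C G D a b = total_ricci C G D b a" for x y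
    using that total_ricci_decompose[of x y] total_ricci_decompose[of y x] G_pplus G_pminus
    by (simp add: add.commute)
  ultimately show ?thesis by blast
qed

end

theorem theorem4p6:
  fixes C :: "('f::{comm_ring_1,real_algebra_1}, 's::real_vector) courant"
    and G :: "'s \<Rightarrow> 's" and dv :: "'s \<Rightarrow> 'f" and D :: "'s \<Rightarrow> 's \<Rightarrow> 's"
  assumes "courant_algebroid C"
    and "gen_metric C G"
    and "divergence_op C dv"
    and "gen_connection C D"
    and "metric_connection G D"
    and "has_divergence C D dv"
    and "pure_type_torsion C G D"
  shows "(\<forall>a b. total_ricci C G D a b = total_ricci C G D b a) \<longleftrightarrow> compatible_pair C G dv"
proof -
  interpret pure_metric_connection C D G dv
    by unfold_locales (fact assms)+
  show ?thesis
    by (rule total_ricci_symmetric_iff_compatible)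
qed

end
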